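(* Let $k\ge0$ be an integer and $a,b\in\mathbb{C}$ generic. Put $u=\tfrac34-\tfrac k2-\tfrac a2+\tfrac b2$, $v=\tfrac34-\tfrac k2-\tfrac a2-\tfrac b2$ (assume $(u)_k(v)_k\ne0$), and define the polynomial of degree $2k$ in $n$ $$Q_k^{(3')}(n;a;b)=\frac{1}{(u)_k(v)_k}\sum_{j=0}^{k}\frac{(-\tfrac n2)_j(-\tfrac n2+\tfrac12)_j(-k)_j}{j!}\,(u-n+j)_{k-j}(v-n+j)_{k-j},$$ i.e. $\frac{(u-n)_k(v-n)_k}{(u)_k(v)_k}\,{}_3F_2\!\left[\begin{smallmatrix}-\frac n2,\ -\frac n2+\frac12,\ -k\\ u-n,\ v-n\end{smallmatrix}\big|1\right]$. Then, near $x=0$, $${}_3F_2\!\left[\begin{matrix}\tfrac a3,\ \tfrac13+\tfrac a3,\ \tfrac23+\tfrac a3\\ \tfrac34+\tfrac k2+\tfrac a2+\tfrac b2,\ \tfrac34+\tfrac k2+\tfrac a2-\tfrac b2\end{matrix}\,\Big|\,\frac{27x^2}{(4-x)^3}\right]=\Bigl(1-\tfrac x4\Bigr)^a\sum_{n=0}^\infty\frac{(a)_n(\tfrac14-\tfrac k2+\tfrac a2-\tfrac b2)_n(\tfrac14-\tfrac k2+\tfrac a2+\tfrac b2)_n}{n!\,(\tfrac12+k+a+b)_n(\tfrac12+k+a-b)_n}\,Q_k^{(3')}(n;a;b)\,x^n.$$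
   Context: $(c)_n$ denotes the Pochhammer symbol, $(c)_0=1$; ${}_pF_q$ is the generalized hypergeometric series. Parameters are assumed such that no lower parameter is a nonpositive integer. *)

theory Defs
  imports "HOL-Analysis.Analysis"
begin

definition hyp3F2 :: "complex \<Rightarrow> complex \<Rightarrow> complex \<Rightarrow> complex \<Rightarrow> complex \<Rightarrow> complex \<Rightarrow> complex" where
  "hyp3F2 a1 a2 a3 b1 b2 z =
     (\<Sum>n. pochhammer a1 n * pochhammer a2 n * pochhammer a3 n
           / (pochhammer b1 n * pochhammer b2 n * fact n) * z ^ n)"

definition u3 :: "nat \<Rightarrow> complex \<Rightarrow> complex \<Rightarrow> complex" where
  "u3 k a b = 3/4 - of_nat k / 2 - a/2 + b/2"

definition v3 :: "nat \<Rightarrow> complex \<Rightarrow> complex \<Rightarrow> complex" where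
  "v3 k a b = 3/4 - of_nat k / 2 - a/2 - b/2"

definition Q3' :: "nat \<Rightarrow> nat \<Rightarrow> complex \<Rightarrow> complex \<Rightarrow> complex" where
  "Q3' k n a b =
     (1 / (pochhammer (u3 k a b) k * pochhammer (v3 k a b) k)) *
     (\<Sum>j\<le>k. pochhammer (- of_nat n / 2) j * pochhammer (- of_nat n / 2 + 1/2) j
               * pochhammer (- of_nat k) j / fact j
               * pochhammer (u3 k a b - of_nat n + of_nat j) (k - j)
               * pochhammer (v3 k a b - of_nat n + of_nat j) (k - j))"

definition coef3 :: "nat \<Rightarrow> complex \<Rightarrow> complex \<Rightarrow> nat \<Rightarrow> complex" where
  "coef3 k a b n =
     pochhammer a n * pochhammer (1/4 - of_nat k/2 + a/2 - b/2) n
       * pochhammer (1/4 - of_nat k/2 + a/2 + b/2) n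
     / (fact n * pochhammer (1/2 + of_nat k + a + b) n * pochhammer (1/2 + of_nat k + a - b) n)
     * Q3' k n a b"

end

theory Submission
  imports Defs
begin

(*
  Multiply the left-hand side by (1 - x/4) powr (-a): since
  (27 x^2/(4 - x)^3)^m (1 - x/4)^(-a) = (27/64)^m x^(2m) (1 - x/4)^(-3m-a), expanding
  each power of (1 - x/4) by the binomial series gives an absolutely convergent double
  series.  Collecting the powers x^N and using (a)_(3m) = 27^m (a/3)_m (a/3+1/3)_m (a/3+2/3)_m
  and N!/(N-2m)! = 4^m (-(N div 2))_m (1/2 - N + N div 2)_m, its N-th coefficient is
  (a)_N/(N! 4^N) times a terminating 3F2 at 1 with upper parameters
  -(N div 2), 1/2 - N + N div 2, a + N.  Sheppard's transformation, i.e. two applications of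
  a transformation proved by Chu-Vandermonde, turns it into the terminating 3F2 defining
  Q_k^(3'), which is the coefficient on the right.

  Sheppard's transformation needs some further Pochhammer symbols to be nonzero.  Both
  sides of the coefficient identity are continuous in b and these extra conditions fail
  only for finitely many b, so they can be dropped.
*)

section \<open>Pochhammer identities\<close>

lemma pochhammer_neq_0_all:
  assumes "\<forall>m::nat. z \<noteq> - of_nat m"
  shows "pochhammer (z :: 'a::field_char_0) n \<noteq> 0"
  using assms by (auto simp: pochhammer_eq_0_iff)

lemma pochhammer_neq_0_imp_add_of_nat_neq_0:
  assumes "pochhammer (e :: 'a::field_char_0) n \<noteq> 0" "i < n"
  shows "e + of_nat i \<noteq> 0"
  using assms by (auto simp: pochhammer_eq_0_iff eq_neg_iff_add_eq_0)

lemma pochhammer_minus_of_nat: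
  assumes "i \<le> n"
  shows "pochhammer (- of_nat n :: 'a::field_char_0) i = (-1)^i * fact n / fact (n - i)"
proof -
  have "pochhammer (- of_nat n :: 'a) i = (-1)^i * pochhammer (of_nat (n - i) + 1) i"
    using assms by (subst pochhammer_minus) (simp add: of_nat_diff algebra_simps)
  moreover have "fact (n - i) * pochhammer (of_nat (n - i) + 1 :: 'a) i = fact n"
    using pochhammer_product'[of "1::'a" "n - i" i] assms by (simp add: pochhammer_fact add.commute)
  ultimately show ?thesis by (simp add: field_simps)
qed

lemma pochhammer_split_minus:
  fixes z :: "'a::comm_ring_1"
  assumes "i \<le> n"
  shows "pochhammer z n = (-1)^i * pochhammer z (n - i) * pochhammer (1 - z - of_nat n) i"
proof -
  have "pochhammer z n = pochhammer z (n - i) * pochhammer (z + of_nat (n - i)) i"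
    using pochhammer_product'[of z "n - i" i] assms by simp
  also have "pochhammer (z + of_nat (n - i)) i = (-1)^i * pochhammer (1 - z - of_nat n) i"
    using pochhammer_minus'[of "- z - of_nat (n - i)" i] assms by (simp add: of_nat_diff algebra_simps)
  finally show ?thesis by (simp add: mult_ac)
qed

lemma pochhammer_triple:
  fixes a :: "'a::field_char_0"
  shows "27^m * pochhammer (a/3) m * pochhammer (1/3 + a/3) m * pochhammer (2/3 + a/3) m
       = pochhammer a (3*m)"
proof (induction m)
  case (Suc m)
  have "27^Suc m * pochhammer (a/3) (Suc m) * pochhammer (1/3 + a/3) (Suc m) * pochhammer (2/3 + a/3) (Suc m)
      = (27^m * pochhammer (a/3) m * pochhammer (1/3 + a/3) m * pochhammer (2/3 + a/3) m)
        * (27 * ((a/3 + of_nat m) * (1/3 + a/3 + of_nat m) * (2/3 + a/3 + of_nat m)))"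
    by (simp add: pochhammer_Suc ac_simps)
  also have "27 * ((a/3 + of_nat m) * (1/3 + a/3 + of_nat m) * (2/3 + a/3 + of_nat m))
      = pochhammer (a + of_nat (3*m)) 3"
    by (simp add: numeral_3_eq_3 pochhammer_Suc field_simps)
  also have "(27^m * pochhammer (a/3) m * pochhammer (1/3 + a/3) m * pochhammer (2/3 + a/3) m)
        * pochhammer (a + of_nat (3*m)) 3 = pochhammer a (3*m + 3)"
    unfolding Suc by (rule pochhammer_product'[symmetric])
  finally show ?case by (simp add: add.commute)
qed simp

lemma pochhammer_half_pair:
  "pochhammer (- of_nat N / 2 :: 'a::field_char_0) m * pochhammer (- of_nat N / 2 + 1/2) m
   = pochhammer (- of_nat (N div 2)) m * pochhammer (1/2 - of_nat N + of_nat (N div 2)) m"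
proof (cases "even N")
  case True
  then obtain n where "N = 2*n" by blast
  then show ?thesis by (simp add: field_simps)
next
  case False
  then obtain n where "N = 2*n + 1" using oddE by blast
  then show ?thesis by (simp add: field_simps mult.commute)
qed

lemma fact_div_fact_double:
  assumes "2*m \<le> N"
  shows "fact N / fact (N - 2*m) = (4::'a::field_char_0)^m * pochhammer (- of_nat (N div 2)) m
           * pochhammer (1/2 - of_nat N + of_nat (N div 2)) m"
proof -
  have "fact N / fact (N - 2*m) = pochhammer (2 * (- of_nat N / 2) :: 'a) (2*m)"
    using pochhammer_minus_of_nat[OF assms, where 'a='a] by simp
  also have "\<dots> = of_nat (2^(2*m)) * pochhammer (- of_nat N / 2) m * pochhammer (- of_nat N / 2 + 1/2) m"
    by (rule pochhammer_double)
  also have "of_nat (2^(2*m)) = (4::'a)^m" by (simp add: power_mult)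
  finally show ?thesis using pochhammer_half_pair[of N m] by (simp add: mult.assoc)
qed

lemma pochhammer_shift_reflect:
  fixes x :: "'a::field_char_0"
  shows "pochhammer (x - of_nat k) N * pochhammer (1 - x - of_nat N) k
       = pochhammer x N * pochhammer (1 - x) k"
proof -
  have "pochhammer (1 - x - of_nat N) k = (-1)^k * pochhammer (x - of_nat k + of_nat N) k"
    using pochhammer_minus[of "x + of_nat N - 1" k] by (simp add: algebra_simps)
  moreover have "pochhammer (1 - x) k = (-1)^k * pochhammer (x - of_nat k) k"
    using pochhammer_minus[of "x - 1" k] by (simp add: algebra_simps)
  moreover have "pochhammer (x - of_nat k) N * pochhammer (x - of_nat k + of_nat N) k
      = pochhammer (x - of_nat k) k * pochhammer x N"
    using pochhammer_product'[of "x - of_nat k" N k] pochhammer_product'[of "x - of_nat k" k N]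
    by (simp add: add.commute)
  ultimately show ?thesis by (simp add: mult_ac)
qed

lemma pochhammer_double_div2:
  fixes x :: "'a::field_char_0"
  shows "2^N * pochhammer x N * pochhammer (x + 1/2) (N div 2)
       = pochhammer (2*x) N * pochhammer (x + of_nat N - of_nat (N div 2)) (N div 2)"
proof (cases "even N")
  case True
  then obtain n where N: "N = 2*n" by blast
  have "pochhammer x (2*n) = pochhammer x n * pochhammer (x + of_nat n) n"
    using pochhammer_product'[of x n n] by (simp add: mult_2)
  moreover have "pochhammer (2*x) (2*n) = of_nat (2^(2*n)) * pochhammer x n * pochhammer (x + 1/2) n"
    by (rule pochhammer_double)
  ultimately show ?thesis
    unfolding N by (simp add: ac_simps)
next
  case False
  then obtain n where N: "N = 2*n + 1" using oddE by blast
  have "pochhammer x (2*n + 1) = pochhammer x (Suc n) * pochhammer (x + of_nat (Suc n)) n"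
    using pochhammer_product'[of x "Suc n" n] by (simp add: mult_2)
  also have "\<dots> = pochhammer x n * (x + of_nat n) * pochhammer (x + of_nat n + 1) n"
    by (simp add: pochhammer_Suc add_ac)
  finally have p: "pochhammer x (2*n + 1) = pochhammer x n * (x + of_nat n) * pochhammer (x + of_nat n + 1) n" .
  have d: "pochhammer (2*x) (2*n + 1) = 2^(2*n) * pochhammer x n * pochhammer (x + 1/2) n * (2 * (x + of_nat n))"
    using pochhammer_double[of x n] by (simp add: pochhammer_Suc)
  have s: "x + of_nat (2*n + 1) - of_nat n = x + of_nat n + 1" by simp
  have h: "(2*n + 1) div 2 = n" by simp
  show ?thesis
    unfolding N p d s h power_add power_one_right by (simp only: ac_simps)
qed

lemma pochhammer_reflect_double:
  fixes x :: "'a::field_char_0"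
  shows "2^N * pochhammer (x - of_nat k) N * pochhammer (1 - x - of_nat N) k * pochhammer (x + 1/2) (N div 2)
       = pochhammer (2*x) N * pochhammer (x + of_nat N - of_nat (N div 2)) (N div 2) * pochhammer (1 - x) k"
proof -
  have "2^N * pochhammer (x - of_nat k) N * pochhammer (1 - x - of_nat N) k * pochhammer (x + 1/2) (N div 2)
      = (2^N * pochhammer x N * pochhammer (x + 1/2) (N div 2)) * pochhammer (1 - x) k"
    using pochhammer_shift_reflect[of x k N] by (simp only: ac_simps)
  then show ?thesis by (simp only: pochhammer_double_div2)
qed

section \<open>Terminating hypergeometric series at 1\<close>

definition terminating_3F2 :: "nat \<Rightarrow> 'a \<Rightarrow> 'a \<Rightarrow> 'a \<Rightarrow> 'a \<Rightarrow> 'a::field_char_0" where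
  "terminating_3F2 n a b d e =
     (\<Sum>j\<le>n. pochhammer (- of_nat n) j * pochhammer a j * pochhammer b j
              / (pochhammer d j * pochhammer e j * fact j))"

lemma terminating_3F2_atMost:
  assumes "n \<le> M"
  shows "terminating_3F2 n a b d e =
     (\<Sum>j\<le>M. pochhammer (- of_nat n) j * pochhammer a j * pochhammer b j
              / (pochhammer d j * pochhammer e j * fact j))"
  unfolding terminating_3F2_def
  by (rule sum.mono_neutral_left) (use assms in \<open>auto simp: pochhammer_of_nat_eq_0_lemma\<close>)

lemma Vandermonde_pochhammer_atMost:
  fixes e c :: "'a::field_char_0"
  assumes "pochhammer e n \<noteq> 0" "j \<le> n"
  shows "pochhammer (e - c) j / pochhammer e j =
     (\<Sum>i\<le>n. pochhammer c i * pochhammer (- of_nat j) i / (fact i * pochhammer e i))"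
proof -
  have "\<forall>i\<in>{0..<j}. e \<noteq> - of_nat i"
    using pochhammer_neq_0_imp_add_of_nat_neq_0[OF assms(1)] assms(2)
    by (auto simp: eq_neg_iff_add_eq_0)
  from Vandermonde_pochhammer[OF this, of c]
  have "pochhammer (e - c) j / pochhammer e j =
      (\<Sum>i\<in>{0..j}. pochhammer c i * pochhammer (- of_nat j) i / (fact i * pochhammer e i))"
    by simp
  also have "\<dots> = (\<Sum>i\<le>n. pochhammer c i * pochhammer (- of_nat j) i / (fact i * pochhammer e i))"
    by (rule sum.mono_neutral_left) (use assms in \<open>auto simp: pochhammer_of_nat_eq_0_lemma\<close>)
  finally show ?thesis .
qed

lemma Vandermonde_shift_term:
  fixes a d :: "'a::field_char_0"
  assumes i: "i \<le> n" and d: "pochhammer d (i + l) \<noteq> 0"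
  shows "pochhammer (- of_nat n) (l + i) * pochhammer a (l + i) * pochhammer (- of_nat (l + i)) i
           / (pochhammer d (l + i) * fact (l + i))
       = (-1)^i * pochhammer (- of_nat n) i * pochhammer a i / pochhammer d i
           * (pochhammer (a + of_nat i) l * pochhammer (- of_nat (n - i)) l
              / (fact l * pochhammer (d + of_nat i) l))"
proof -
  have e1: "pochhammer (- of_nat n :: 'a) (i + l) = pochhammer (- of_nat n) i * pochhammer (- of_nat (n - i)) l"
    using i by (simp add: pochhammer_product' of_nat_diff)
  have e2: "pochhammer (- of_nat (i + l) :: 'a) i / fact (i + l) = (-1)^i / fact l"
    using pochhammer_minus_of_nat[of i "i + l", where 'a='a] by simp
  have "pochhammer (- of_nat n) (l + i) * pochhammer a (l + i) * pochhammer (- of_nat (l + i)) i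
           / (pochhammer d (l + i) * fact (l + i))
      = pochhammer (- of_nat n) (i + l) * pochhammer a (i + l) *
        (pochhammer (- of_nat (i + l)) i / fact (i + l)) / pochhammer d (i + l)"
    by (simp add: add.commute)
  also have "\<dots> = (-1)^i * pochhammer (- of_nat n) i * pochhammer a i / pochhammer d i
           * (pochhammer (a + of_nat i) l * pochhammer (- of_nat (n - i)) l
              / (fact l * pochhammer (d + of_nat i) l))"
    using d unfolding e1 e2 pochhammer_product'[of a] pochhammer_product'[of d] by (simp add: field_simps)
  finally show ?thesis .
qed

lemma Vandermonde_pochhammer_shifted:
  fixes a d :: "'a::field_char_0"
  assumes d: "pochhammer d n \<noteq> 0" and f: "pochhammer (1 + a - d - of_nat n) n \<noteq> 0"
    and i: "i \<le> n"
  shows "(\<Sum>j\<le>n. pochhammer (- of_nat n) j * pochhammer a j * pochhammer (- of_nat j) i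
            / (pochhammer d j * fact j))
       = pochhammer (- of_nat n) i * pochhammer a i * pochhammer (d - a) n
            / (pochhammer d n * pochhammer (1 + a - d - of_nat n) i)"
proof -
  define g where "g j = pochhammer (- of_nat n) j * pochhammer a j * pochhammer (- of_nat j) i
            / (pochhammer d j * fact j)" for j
  define C where "C = (-1)^i * pochhammer (- of_nat n) i * pochhammer a i / pochhammer d i"
  \<comment> \<open>only the terms with \<open>j \<ge> i\<close> survive; after the shift \<open>j = i + l\<close> they form a Vandermonde sum\<close>
  have "(\<Sum>j\<le>n. g j) = (\<Sum>j\<in>{i..n}. g j)"
    by (rule sum.mono_neutral_right) (auto simp: g_def pochhammer_of_nat_eq_0_lemma)
  also have "\<dots> = (\<Sum>l=0..n-i. g (l + i))"
    using sum.shift_bounds_cl_nat_ivl[of g 0 i "n - i"] i by simp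
  also have "\<dots> = C * (\<Sum>l=0..n-i. pochhammer (a + of_nat i) l * pochhammer (- of_nat (n - i)) l /
           (fact l * pochhammer (d + of_nat i) l))"
    unfolding sum_distrib_left
  proof (rule sum.cong[OF refl])
    fix l assume "l \<in> {0..n-i}"
    then have "pochhammer d (i + l) \<noteq> 0" using pochhammer_neq_0_mono[OF d] i by auto
    then show "g (l + i) = C * (pochhammer (a + of_nat i) l * pochhammer (- of_nat (n - i)) l /
           (fact l * pochhammer (d + of_nat i) l))"
      unfolding g_def C_def by (rule Vandermonde_shift_term[OF i])
  qed
  also have "\<dots> = C * (pochhammer (d - a) (n - i) / pochhammer (d + of_nat i) (n - i))"
  proof -
    have "\<forall>l\<in>{0..<n-i}. d + of_nat i \<noteq> - of_nat l"
      using pochhammer_neq_0_imp_add_of_nat_neq_0[OF d, of "i + _"]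
      by (auto simp: eq_neg_iff_add_eq_0 add.assoc)
    from Vandermonde_pochhammer[OF this, of "a + of_nat i"] show ?thesis by simp
  qed
  also have "\<dots> = pochhammer (- of_nat n) i * pochhammer a i * pochhammer (d - a) n
            / (pochhammer d n * pochhammer (1 + a - d - of_nat n) i)"
  proof -
    have p1: "pochhammer d n = pochhammer d i * pochhammer (d + of_nat i) (n - i)"
      using pochhammer_product[OF i] .
    have p2: "pochhammer (d - a) n = (-1)^i * pochhammer (d - a) (n - i) * pochhammer (1 + a - d - of_nat n) i"
      using pochhammer_split_minus[OF i, of "d - a"] by (simp add: algebra_simps)
    have "pochhammer (1 + a - d - of_nat n) i \<noteq> 0" using pochhammer_neq_0_mono[OF f i] .
    moreover have "pochhammer d i \<noteq> 0" "pochhammer (d + of_nat i) (n - i) \<noteq> 0" using d p1 by auto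
    moreover have "(-1::'a)^i * (-1)^i = 1" by (simp flip: power_mult_distrib)
    ultimately show ?thesis unfolding p1 p2 C_def by (simp add: field_simps)
  qed
  finally show ?thesis unfolding g_def .
qed

lemma terminating_3F2_transform:
  fixes a b d e :: "'a::field_char_0"
  assumes d: "pochhammer d n \<noteq> 0" and e: "pochhammer e n \<noteq> 0"
    and f: "pochhammer (1 + a - d - of_nat n) n \<noteq> 0"
  shows "terminating_3F2 n a b d e
       = pochhammer (d - a) n / pochhammer d n * terminating_3F2 n a (e - b) e (1 + a - d - of_nat n)"
proof -
  define w where "w j = pochhammer (- of_nat n) j * pochhammer a j / (pochhammer d j * fact j)" for j
  \<comment> \<open>expand \<open>(b)\<^sub>j/(e)\<^sub>j\<close> by Vandermonde and interchange the two summations\<close>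
  have "terminating_3F2 n a b d e = (\<Sum>j\<le>n. w j * (pochhammer b j / pochhammer e j))"
    unfolding terminating_3F2_def w_def by (intro sum.cong refl) (simp add: divide_simps mult_ac)
  also have "\<dots> = (\<Sum>j\<le>n. \<Sum>i\<le>n. pochhammer (e - b) i / (fact i * pochhammer e i) *
        (w j * pochhammer (- of_nat j) i))"
  proof (rule sum.cong[OF refl])
    fix j assume "j \<in> {..n}"
    then have "pochhammer b j / pochhammer e j =
        (\<Sum>i\<le>n. pochhammer (e - b) i * pochhammer (- of_nat j) i / (fact i * pochhammer e i))"
      using Vandermonde_pochhammer_atMost[OF e, of j "e - b"] by simp
    then show "w j * (pochhammer b j / pochhammer e j) = (\<Sum>i\<le>n. pochhammer (e - b) i
        / (fact i * pochhammer e i) * (w j * pochhammer (- of_nat j) i))"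
      by (simp add: sum_distrib_left mult_ac)
  qed
  also have "\<dots> = (\<Sum>i\<le>n. pochhammer (e - b) i / (fact i * pochhammer e i) *
        (\<Sum>j\<le>n. w j * pochhammer (- of_nat j) i))"
    by (subst sum.swap) (simp add: sum_distrib_left)
  also have "\<dots> = (\<Sum>i\<le>n. pochhammer (e - b) i / (fact i * pochhammer e i) *
        (pochhammer (- of_nat n) i * pochhammer a i * pochhammer (d - a) n
            / (pochhammer d n * pochhammer (1 + a - d - of_nat n) i)))"
    using Vandermonde_pochhammer_shifted[OF d f]
    by (intro sum.cong refl) (simp add: w_def mult_ac)
  also have "\<dots> = pochhammer (d - a) n / pochhammer d n * terminating_3F2 n a (e - b) e (1 + a - d - of_nat n)"
    unfolding terminating_3F2_def sum_distrib_left by (intro sum.cong refl) (simp add: divide_simps mult_ac)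
  finally show ?thesis .
qed

lemma terminating_3F2_Sheppard:
  fixes a b d e :: "'a::field_char_0"
  assumes "pochhammer d n \<noteq> 0" "pochhammer e n \<noteq> 0"
    and "pochhammer (1 + a - d - of_nat n) n \<noteq> 0" "pochhammer (1 + a - e - of_nat n) n \<noteq> 0"
  shows "terminating_3F2 n a b d e
       = pochhammer (d - a) n * pochhammer (e - a) n / (pochhammer d n * pochhammer e n)
         * terminating_3F2 n a (1 + a + b - d - e - of_nat n) (1 + a - d - of_nat n) (1 + a - e - of_nat n)"
  using terminating_3F2_transform[OF assms(1,2,3), of b]
    terminating_3F2_transform[OF assms(2,3,4), of "e - b"]
  by (simp add: algebra_simps)

section \<open>The coefficient identity\<close>

definition hyp3F2_coeff :: "'a \<Rightarrow> 'a \<Rightarrow> 'a \<Rightarrow> 'a \<Rightarrow> 'a \<Rightarrow> nat \<Rightarrow> 'a::field_char_0" where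
  "hyp3F2_coeff a1 a2 a3 b1 b2 m = pochhammer a1 m * pochhammer a2 m * pochhammer a3 m
      / (pochhammer b1 m * pochhammer b2 m * fact m)"

text \<open>The coefficient of \<open>x^N\<close> in \<open>\<Sum>m. c m * (27/64)^m * x^(2*m) * (1 - x/4) powr (- 3*m - a)\<close>,
  that is, in \<open>(1 - x/4) powr (- a) * (\<Sum>m. c m * (27 * x^2 / (4 - x)^3)^m)\<close>.\<close>
definition cubic_substitution_coeff :: "(nat \<Rightarrow> 'a) \<Rightarrow> 'a \<Rightarrow> nat \<Rightarrow> 'a::field_char_0" where
  "cubic_substitution_coeff c a N =
     (\<Sum>m\<le>N div 2. c m * (27/64)^m * pochhammer (of_nat (3*m) + a) (N - 2*m)
                     / (fact (N - 2*m) * 4^(N - 2*m)))"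

lemma cubic_substitution_coeff_hyp3F2_term:
  fixes a d e :: "'a::field_char_0"
  assumes m: "2*m \<le> N" and de: "pochhammer d m * pochhammer e m \<noteq> 0"
  shows "hyp3F2_coeff (a/3) (1/3 + a/3) (2/3 + a/3) d e m * (27/64)^m
           * pochhammer (of_nat (3*m) + a) (N - 2*m) / (fact (N - 2*m) * 4^(N - 2*m))
       = pochhammer a N / (fact N * 4^N) * (pochhammer (- of_nat (N div 2)) m
           * pochhammer (1/2 - of_nat N + of_nat (N div 2)) m * pochhammer (a + of_nat N) m
           / (pochhammer d m * pochhammer e m * fact m))"
proof -
  define X where "X = pochhammer (- of_nat (N div 2)) m * pochhammer (1/2 - of_nat N + of_nat (N div 2) :: 'a) m"
  have P: "pochhammer (a/3) m * pochhammer (1/3 + a/3) m * pochhammer (2/3 + a/3) m = pochhammer a (3*m) / 27^m"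
    using pochhammer_triple[of m a] by (simp add: field_simps)
  have "pochhammer a (3*m) * pochhammer (of_nat (3*m) + a) (N - 2*m) = pochhammer a (3*m + (N - 2*m))"
    by (simp add: pochhammer_product' add.commute)
  also have "\<dots> = pochhammer a N * pochhammer (a + of_nat N) m"
    using m pochhammer_product'[of a N m] by (simp add: add.commute)
  finally have pp: "pochhammer a (3*m) * pochhammer (of_nat (3*m) + a) (N - 2*m)
      = pochhammer a N * pochhammer (a + of_nat N) m" .
  have F: "fact N = (4::'a)^m * X * fact (N - 2*m)"
    using fact_div_fact_double[OF m, where 'a='a] unfolding X_def by (simp add: field_simps)
  then have "X \<noteq> 0" by auto
  moreover have "(4::'a)^(N - 2*m) * 4^(2*m) = 4^N" using m by (simp flip: power_add)
  moreover have "(64::'a)^m = 4^(2*m) * 4^m"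
    by (simp flip: power_add power_mult_distrib add: power_mult)
  ultimately show ?thesis
    unfolding hyp3F2_coeff_def P X_def[symmetric] using pp F de by (simp add: field_simps)
qed

lemma cubic_substitution_coeff_hyp3F2:
  fixes a d e :: "'a::field_char_0"
  assumes "pochhammer d (N div 2) \<noteq> 0" "pochhammer e (N div 2) \<noteq> 0"
  shows "cubic_substitution_coeff (hyp3F2_coeff (a/3) (1/3 + a/3) (2/3 + a/3) d e) a N
       = pochhammer a N / (fact N * 4^N)
         * terminating_3F2 (N div 2) (1/2 - of_nat N + of_nat (N div 2)) (a + of_nat N) d e"
  unfolding cubic_substitution_coeff_def terminating_3F2_def sum_distrib_left
proof (rule sum.cong[OF refl])
  fix m assume "m \<in> {..N div 2}"
  then show "hyp3F2_coeff (a/3) (1/3 + a/3) (2/3 + a/3) d e m * (27/64)^m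
           * pochhammer (of_nat (3*m) + a) (N - 2*m) / (fact (N - 2*m) * 4^(N - 2*m))
       = pochhammer a N / (fact N * 4^N) * (pochhammer (- of_nat (N div 2)) m
           * pochhammer (1/2 - of_nat N + of_nat (N div 2)) m * pochhammer (a + of_nat N) m
           / (pochhammer d m * pochhammer e m * fact m))"
    using assms pochhammer_neq_0_mono[of d "N div 2" m] pochhammer_neq_0_mono[of e "N div 2" m]
    by (intro cubic_substitution_coeff_hyp3F2_term) auto
qed

lemma Q3'_eq_terminating_3F2:
  fixes a b :: complex and k N :: nat
  defines "U \<equiv> u3 k a b - of_nat N" and "V \<equiv> v3 k a b - of_nat N"
  assumes U: "pochhammer U (N div 2 + k) \<noteq> 0" and V: "pochhammer V (N div 2 + k) \<noteq> 0"
    and uv: "pochhammer (u3 k a b) k * pochhammer (v3 k a b) k \<noteq> 0"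
  shows "Q3' k N a b * (pochhammer (u3 k a b) k * pochhammer (v3 k a b) k)
       = pochhammer U k * pochhammer V k
         * terminating_3F2 (N div 2) (1/2 - of_nat N + of_nat (N div 2)) (- of_nat k) V U"
proof -
  define n where "n = N div 2"
  define A :: complex where "A = 1/2 - of_nat N + of_nat n"
  define q where "q j = pochhammer (- of_nat N / 2) j * pochhammer (- of_nat N / 2 + 1/2) j
      * pochhammer (- of_nat k) j / fact j * pochhammer (U + of_nat j) (k - j)
      * pochhammer (V + of_nat j) (k - j)" for j :: nat
  have "Q3' k N a b * (pochhammer (u3 k a b) k * pochhammer (v3 k a b) k) = (\<Sum>j\<le>k. q j)"
    unfolding Q3'_def q_def U_def V_def using uv by simp
  also have "\<dots> = (\<Sum>j\<le>n + k. q j)"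
    by (rule sum.mono_neutral_left) (auto simp: q_def pochhammer_of_nat_eq_0_lemma)
  also have "\<dots> = (\<Sum>j\<le>n + k. pochhammer U k * pochhammer V k * (pochhammer (- of_nat n) j
      * pochhammer A j * pochhammer (- of_nat k) j / (pochhammer V j * pochhammer U j * fact j)))"
  proof (rule sum.cong[OF refl])
    fix j assume "j \<in> {..n + k}"
    show "q j = pochhammer U k * pochhammer V k * (pochhammer (- of_nat n) j
      * pochhammer A j * pochhammer (- of_nat k) j / (pochhammer V j * pochhammer U j * fact j))"
    proof (cases "j \<le> k")
      case True
      have "pochhammer U j \<noteq> 0" "pochhammer V j \<noteq> 0"
        using pochhammer_neq_0_mono[OF U, of j] pochhammer_neq_0_mono[OF V, of j] True by auto
      moreover have "pochhammer U k = pochhammer U j * pochhammer (U + of_nat j) (k - j)"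
        "pochhammer V k = pochhammer V j * pochhammer (V + of_nat j) (k - j)"
        using pochhammer_product[OF True] by auto
      moreover have "pochhammer (- of_nat N / 2) j * pochhammer (- of_nat N / 2 + 1/2) j
           = pochhammer (- of_nat n) j * pochhammer A j"
        unfolding n_def A_def by (rule pochhammer_half_pair)
      ultimately show ?thesis unfolding q_def by (simp add: field_simps)
    qed (simp add: q_def pochhammer_of_nat_eq_0_lemma)
  qed
  also have "\<dots> = pochhammer U k * pochhammer V k * terminating_3F2 n A (- of_nat k) V U"
    by (simp add: terminating_3F2_atMost[of n "n + k"] sum_distrib_left)
  finally show ?thesis unfolding n_def A_def .
qed

lemma Sheppard_prefactor_identity:
  fixes a b :: complex and k N :: nat
  defines "B0 \<equiv> 3/4 + of_nat k/2 + a/2 + b/2" and "B1 \<equiv> 3/4 + of_nat k/2 + a/2 - b/2"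
    and "A \<equiv> 1/2 - of_nat N + of_nat (N div 2)"
  shows "4^N * pochhammer (1/4 - of_nat k/2 + a/2 - b/2) N * pochhammer (1/4 - of_nat k/2 + a/2 + b/2) N
           * pochhammer (u3 k a b - of_nat N) k * pochhammer (v3 k a b - of_nat N) k
           * pochhammer B0 (N div 2) * pochhammer B1 (N div 2)
       = pochhammer (B0 - A) (N div 2) * pochhammer (B1 - A) (N div 2)
           * pochhammer (u3 k a b) k * pochhammer (v3 k a b) k
           * pochhammer (1/2 + of_nat k + a + b) N * pochhammer (1/2 + of_nat k + a - b) N"
proof -
  have "B0 - 1/2 - of_nat k = 1/4 - of_nat k/2 + a/2 + b/2"
    "B0 - 1/2 + 1/2 = B0" "2 * (B0 - 1/2) = 1/2 + of_nat k + a + b"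
    "B0 - 1/2 + of_nat N - of_nat (N div 2) = B0 - A" "1 - (B0 - 1/2) = v3 k a b"
    by (simp_all add: B0_def A_def v3_def field_simps)
  note I0 = pochhammer_reflect_double[of N "B0 - 1/2" k, unfolded this]
  have "B1 - 1/2 - of_nat k = 1/4 - of_nat k/2 + a/2 - b/2"
    "B1 - 1/2 + 1/2 = B1" "2 * (B1 - 1/2) = 1/2 + of_nat k + a - b"
    "B1 - 1/2 + of_nat N - of_nat (N div 2) = B1 - A" "1 - (B1 - 1/2) = u3 k a b"
    by (simp_all add: B1_def A_def u3_def field_simps)
  note I1 = pochhammer_reflect_double[of N "B1 - 1/2" k, unfolded this]
  show ?thesis
    using arg_cong2[OF I0 I1, of "(*)"] power_mult_distrib[of "2::complex" 2 N] by (simp add: ac_simps)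
qed

lemma cubic_substitution_coeff_eq_coef3_generic:
  fixes a b :: complex and k N :: nat
  defines "B0 \<equiv> 3/4 + of_nat k/2 + a/2 + b/2" and "B1 \<equiv> 3/4 + of_nat k/2 + a/2 - b/2"
  assumes B0: "pochhammer B0 (N div 2) \<noteq> 0" and B1: "pochhammer B1 (N div 2) \<noteq> 0"
    and ga: "pochhammer (1/2 + of_nat k + a + b) N \<noteq> 0"
    and de: "pochhammer (1/2 + of_nat k + a - b) N \<noteq> 0"
    and uv: "pochhammer (u3 k a b) k * pochhammer (v3 k a b) k \<noteq> 0"
    and U: "pochhammer (u3 k a b - of_nat N) (N div 2 + k) \<noteq> 0"
    and V: "pochhammer (v3 k a b - of_nat N) (N div 2 + k) \<noteq> 0"
  shows "cubic_substitution_coeff (hyp3F2_coeff (a/3) (1/3 + a/3) (2/3 + a/3) B0 B1) a N = coef3 k a b N"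
proof -
  define n where "n = N div 2"
  define A :: complex where "A = 1/2 - of_nat N + of_nat n"
  define U where "U = u3 k a b - of_nat N"
  define V where "V = v3 k a b - of_nat N"
  define F where "F = terminating_3F2 n A (- of_nat k) V U"
  define al where "al = pochhammer (1/4 - of_nat k/2 + a/2 - b/2) N"
  define be where "be = pochhammer (1/4 - of_nat k/2 + a/2 + b/2) N"
  define ga where "ga = pochhammer (1/2 + of_nat k + a + b) N"
  define de where "de = pochhammer (1/2 + of_nat k + a - b) N"
  define uk where "uk = pochhammer (u3 k a b) k"
  define vk where "vk = pochhammer (v3 k a b) k"
  have UV: "pochhammer V n \<noteq> 0" "pochhammer U n \<noteq> 0" "pochhammer V k \<noteq> 0" "pochhammer U k \<noteq> 0"
    using pochhammer_neq_0_mono[OF U] pochhammer_neq_0_mono[OF V] unfolding U_def V_def n_def by auto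
  moreover have "1 + A - B0 - of_nat n = V" "1 + A - B1 - of_nat n = U"
      "1 + A + (a + of_nat N) - B0 - B1 - of_nat n = - of_nat k"
    unfolding A_def B0_def B1_def U_def V_def u3_def v3_def by (simp_all add: field_simps)
  ultimately have Sheppard: "terminating_3F2 n A (a + of_nat N) B0 B1
      = pochhammer (B0 - A) n * pochhammer (B1 - A) n / (pochhammer B0 n * pochhammer B1 n) * F"
    using terminating_3F2_Sheppard[of B0 n B1 A "a + of_nat N"] B0 B1 unfolding F_def n_def by simp
  have Q: "Q3' k N a b * (uk * vk) = pochhammer U k * pochhammer V k * F"
    using Q3'_eq_terminating_3F2[OF U V uv] unfolding F_def U_def V_def n_def A_def uk_def vk_def .
  have key: "4^N * al * be * pochhammer U k * pochhammer V k * pochhammer B0 n * pochhammer B1 n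
      = pochhammer (B0 - A) n * pochhammer (B1 - A) n * uk * vk * ga * de"
    using Sheppard_prefactor_identity[where a = a and b = b and k = k and N = N]
    unfolding al_def be_def ga_def de_def uk_def vk_def U_def V_def A_def n_def B0_def B1_def .
  have "cubic_substitution_coeff (hyp3F2_coeff (a/3) (1/3 + a/3) (2/3 + a/3) B0 B1) a N
      = pochhammer a N / (fact N * 4^N) * terminating_3F2 n A (a + of_nat N) B0 B1"
    using cubic_substitution_coeff_hyp3F2[OF B0 B1] unfolding A_def n_def .
  also have "\<dots> = pochhammer a N / (fact N * 4^N)
      * (pochhammer (B0 - A) n * pochhammer (B1 - A) n / (pochhammer B0 n * pochhammer B1 n))
      * (Q3' k N a b * (uk * vk) / (pochhammer U k * pochhammer V k))"
    using Q UV unfolding Sheppard by (simp add: field_simps)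
  also have "\<dots> = pochhammer a N * al * be / (fact N * ga * de) * Q3' k N a b"
    using key B0 B1 ga de UV unfolding n_def[symmetric] ga_def[symmetric] de_def[symmetric]
    by (simp add: field_simps)
  also have "\<dots> = coef3 k a b N"
    unfolding coef3_def al_def be_def ga_def de_def by simp
  finally show ?thesis .
qed

lemma isCont_pochhammer_compose [continuous_intros]:
  fixes f :: "'a::t2_space \<Rightarrow> 'b::{real_normed_field}"
  shows "isCont f z \<Longrightarrow> isCont (\<lambda>x. pochhammer (f x) n) z"
  by (rule isCont_o2[OF _ isCont_pochhammer])

lemma eventually_pochhammer_affine_neq_0:
  fixes f :: "complex \<Rightarrow> complex"
  assumes f: "\<And>w. f w = f 0 + s * w" and s: "s \<noteq> 0"
  shows "\<forall>\<^sub>F w in at b. pochhammer (f w) M \<noteq> 0"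
proof -
  define c where "c = f 0"
  have f_affine: "f w = c + s * w" for w
    using f unfolding c_def .
  have "\<forall>\<^sub>F w in at b. \<forall>i\<in>{..<M}. w \<noteq> (- of_nat i - c) / s"
    by (intro eventually_ball_finite ballI eventually_neq_at_within) auto
  then show ?thesis
    by eventually_elim (use s in \<open>auto simp: f_affine pochhammer_eq_0_iff field_simps\<close>)
qed

lemma eventually_cubic_substitution_coeff_eq_coef3:
  fixes k N :: nat and a b :: complex
  shows "\<forall>\<^sub>F w in at b. cubic_substitution_coeff (hyp3F2_coeff (a/3) (1/3 + a/3) (2/3 + a/3)
           (3/4 + of_nat k/2 + a/2 + w/2) (3/4 + of_nat k/2 + a/2 - w/2)) a N = coef3 k a w N"
proof -
  have "\<forall>\<^sub>F w in at b. pochhammer (3/4 + of_nat k/2 + a/2 + w/2) (N div 2) \<noteq> 0"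
    by (rule eventually_pochhammer_affine_neq_0[where s="1/2"]) (simp_all add: u3_def v3_def field_simps)
  moreover have "\<forall>\<^sub>F w in at b. pochhammer (3/4 + of_nat k/2 + a/2 - w/2) (N div 2) \<noteq> 0"
    by (rule eventually_pochhammer_affine_neq_0[where s="-1/2"]) (simp_all add: u3_def v3_def field_simps)
  moreover have "\<forall>\<^sub>F w in at b. pochhammer (1/2 + of_nat k + a + w) N \<noteq> 0"
    by (rule eventually_pochhammer_affine_neq_0[where s="1"]) (simp_all add: u3_def v3_def field_simps)
  moreover have "\<forall>\<^sub>F w in at b. pochhammer (1/2 + of_nat k + a - w) N \<noteq> 0"
    by (rule eventually_pochhammer_affine_neq_0[where s="-1"]) (simp_all add: u3_def v3_def field_simps)
  moreover have "\<forall>\<^sub>F w in at b. pochhammer (u3 k a w) k \<noteq> 0"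
    by (rule eventually_pochhammer_affine_neq_0[where s="1/2"]) (simp_all add: u3_def v3_def field_simps)
  moreover have "\<forall>\<^sub>F w in at b. pochhammer (v3 k a w) k \<noteq> 0"
    by (rule eventually_pochhammer_affine_neq_0[where s="-1/2"]) (simp_all add: u3_def v3_def field_simps)
  moreover have "\<forall>\<^sub>F w in at b. pochhammer (u3 k a w - of_nat N) (N div 2 + k) \<noteq> 0"
    by (rule eventually_pochhammer_affine_neq_0[where s="1/2"]) (simp_all add: u3_def v3_def field_simps)
  moreover have "\<forall>\<^sub>F w in at b. pochhammer (v3 k a w - of_nat N) (N div 2 + k) \<noteq> 0"
    by (rule eventually_pochhammer_affine_neq_0[where s="-1/2"]) (simp_all add: u3_def v3_def field_simps)
  ultimately show ?thesis
    by eventually_elim (simp add: cubic_substitution_coeff_eq_coef3_generic)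
qed

lemma cubic_substitution_coeff_eq_coef3:
  fixes k N :: nat and a b :: complex
  assumes uv: "pochhammer (u3 k a b) k * pochhammer (v3 k a b) k \<noteq> 0"
    and l1: "\<forall>m::nat. 3/4 + of_nat k/2 + a/2 + b/2 \<noteq> - of_nat m"
    and l2: "\<forall>m::nat. 3/4 + of_nat k/2 + a/2 - b/2 \<noteq> - of_nat m"
    and l3: "\<forall>m::nat. 1/2 + of_nat k + a + b \<noteq> - of_nat m"
    and l4: "\<forall>m::nat. 1/2 + of_nat k + a - b \<noteq> - of_nat m"
  shows "cubic_substitution_coeff (hyp3F2_coeff (a/3) (1/3 + a/3) (2/3 + a/3)
           (3/4 + of_nat k/2 + a/2 + b/2) (3/4 + of_nat k/2 + a/2 - b/2)) a N = coef3 k a b N"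
proof -
  let ?L = "\<lambda>w. cubic_substitution_coeff (hyp3F2_coeff (a/3) (1/3 + a/3) (2/3 + a/3)
           (3/4 + of_nat k/2 + a/2 + w/2) (3/4 + of_nat k/2 + a/2 - w/2)) a N"
  let ?R = "\<lambda>w. coef3 k a w N"
  have "isCont ?L b"
    unfolding cubic_substitution_coeff_def hyp3F2_coeff_def
    using pochhammer_neq_0_all[OF l1] pochhammer_neq_0_all[OF l2]
    by (intro continuous_intros) auto
  moreover have "isCont ?R b"
    unfolding coef3_def Q3'_def
    using pochhammer_neq_0_all[OF l3] pochhammer_neq_0_all[OF l4] uv
    by (intro continuous_intros) (auto simp: u3_def v3_def)
  ultimately have "\<forall>\<^sub>F w in nhds b. ?L w = ?R w"
    using eventually_cubic_substitution_coeff_eq_coef3 by (intro at_within_isCont_imp_nhds)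
  then show ?thesis
    by (rule eventually_nhds_x_imp_x)
qed

section \<open>The double series\<close>

lemma summable_on_pairs_dominated:
  fixes T :: "nat \<times> nat \<Rightarrow> complex" and G :: "nat \<Rightarrow> nat \<Rightarrow> real"
  assumes bound: "\<And>m j. norm (T (m, j)) \<le> G m j"
    and rows: "\<And>m. G m sums g m" and g: "summable g"
  shows "T summable_on UNIV"
proof -
  have G_nonneg: "0 \<le> G m j" for m j
    using bound[of m j] norm_ge_zero order_trans by blast
  have g_nonneg: "0 \<le> g m" for m
    using sums_le[OF G_nonneg sums_zero rows[of m]] .
  have "(\<lambda>(m, j). G m j) summable_on UNIV"
    using sums_nonneg_imp_has_sum[OF rows] G_nonneg g_nonneg
      summable_nonneg_imp_summable_on[OF g]
    using summable_on_SigmaI[where f = "\<lambda>(m, j). G m j" and g = g and A = UNIV and B = "\<lambda>_. UNIV"]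
    by auto
  then have "(\<lambda>p. norm (T p)) summable_on UNIV"
    by (rule Infinite_Sum.abs_summable_on_comparison_test') (auto simp: bound split: prod.split)
  then show ?thesis
    by (simp add: summable_on_iff_abs_summable_on_complex)
qed

lemma summable_on_pairs_sums_rows:
  fixes T :: "nat \<times> nat \<Rightarrow> complex"
  assumes T: "T summable_on UNIV" and rows: "\<And>m. (\<lambda>j. T (m, j)) sums h m"
  shows "h sums infsum T UNIV"
proof -
  have row: "((\<lambda>j. T (m, j)) has_sum h m) UNIV" for m
  proof -
    have "(\<lambda>j. T (m, j)) summable_on UNIV"
      using summable_on_SigmaD1[of "\<lambda>m j. T (m, j)" UNIV "\<lambda>_. UNIV" m] T by simp
    then have sum: "((\<lambda>j. T (m, j)) has_sum infsum (\<lambda>j. T (m, j)) UNIV) UNIV"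
      by (rule has_sum_infsum)
    have "infsum (\<lambda>j. T (m, j)) UNIV = h m"
      by (rule sums_unique2[OF has_sum_imp_sums[OF sum] rows])
    with sum show ?thesis by simp
  qed
  have "(T has_sum infsum T UNIV) (Sigma UNIV (\<lambda>_. UNIV))"
    using has_sum_infsum[OF T] by simp
  then have "(h has_sum infsum T UNIV) UNIV"
    by (rule has_sum_Sigma') (rule row)
  then show ?thesis
    by (rule has_sum_imp_sums)
qed

lemma summable_on_pairs_sums_diagonals:
  fixes T :: "nat \<times> nat \<Rightarrow> complex"
  assumes T: "T summable_on UNIV"
  shows "(\<lambda>N. \<Sum>m\<le>N div 2. T (m, N - 2*m)) sums infsum T UNIV"
proof -
  define D where "D = Sigma (UNIV :: nat set) (\<lambda>N. {..N div 2})"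
  let ?i = "\<lambda>p. (snd p, fst p - 2 * snd p)" and ?j = "\<lambda>(m::nat, j::nat). (2*m + j, m)"
  \<comment> \<open>the pairs \<open>(m, j)\<close> are enumerated by \<open>N = 2m + j\<close> and \<open>m \<le> N div 2\<close>\<close>
  have "(T has_sum infsum T UNIV) UNIV"
    using T by (rule has_sum_infsum)
  also have "?this \<longleftrightarrow> ((\<lambda>p. T (?i p)) has_sum infsum T UNIV) D"
  proof (rule has_sum_reindex_bij_witness[where i = ?i and j = ?j])
    show "\<And>b. b \<in> D \<Longrightarrow> ?j (?i b) = b" "\<And>a. a \<in> UNIV \<Longrightarrow> ?j a \<in> D"
      unfolding D_def by auto
  qed auto
  finally have "((\<lambda>p. T (?i p)) has_sum infsum T UNIV) D" .
  then have "((\<lambda>N. \<Sum>m\<le>N div 2. T (m, N - 2*m)) has_sum infsum T UNIV) UNIV"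
    unfolding D_def by (rule has_sum_Sigma') (auto intro: has_sum_finite)
  then show ?thesis
    by (rule has_sum_imp_sums)
qed

lemma pochhammer_binomial_series_complex:
  fixes c z :: complex
  assumes "norm z < 1"
  shows "(\<lambda>j. pochhammer c j / fact j * z^j) sums (1 - z) powr (- c)"
proof -
  have "(\<lambda>j. ((- c) gchoose j) * (- z)^j) sums (1 + - z) powr (- c)"
    by (rule gen_binomial_complex) (use assms in simp)
  moreover have "((- c) gchoose j) * (- z)^j = pochhammer c j / fact j * z^j" for j
  proof -
    have "((- c) gchoose j) * (- z)^j = ((-1)^j * (-1)^j) * (pochhammer c j / fact j * z^j)"
      by (simp add: gbinomial_pochhammer power_minus[of z] field_simps)
    also have "(-1)^j * (-1)^j = (1::complex)" by (simp flip: power_mult_distrib)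
    finally show ?thesis by simp
  qed
  ultimately show ?thesis by simp
qed

lemma pochhammer_binomial_series_real:
  fixes c t :: real
  assumes "\<bar>t\<bar> < 1"
  shows "(\<lambda>j. pochhammer c j / fact j * t^j) sums (1 - t) powr (- c)"
proof -
  have "(\<lambda>j. ((- c) gchoose j) * (- t)^j) sums (1 + - t) powr (- c)"
    by (rule gen_binomial_real) (use assms in simp)
  moreover have "((- c) gchoose j) * (- t)^j = pochhammer c j / fact j * t^j" for j
  proof -
    have "((- c) gchoose j) * (- t)^j = ((-1)^j * (-1)^j) * (pochhammer c j / fact j * t^j)"
      by (simp add: gbinomial_pochhammer power_minus[of t] field_simps)
    also have "(-1)^j * (-1)^j = (1::real)" by (simp flip: power_mult_distrib)
    finally show ?thesis by simp
  qed
  ultimately show ?thesis by simp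
qed

lemma norm_pochhammer_le:
  fixes w :: "'a::real_normed_field"
  assumes "norm w \<le> y"
  shows "norm (pochhammer w j) \<le> pochhammer y j"
proof (induction j)
  case (Suc j)
  have "norm (pochhammer w (Suc j)) = norm (pochhammer w j) * norm (w + of_nat j)"
    by (simp add: pochhammer_Suc norm_mult)
  also have "\<dots> \<le> pochhammer y j * (y + of_nat j)"
    using Suc assms norm_triangle_ineq[of w "of_nat j"]
    by (intro mult_mono) (auto intro: order_trans[OF norm_ge_zero])
  finally show ?case by (simp add: pochhammer_Suc)
qed simp

lemma norm_add_of_nat_ge_linear:
  fixes \<beta> :: complex
  assumes "\<forall>m::nat. \<beta> \<noteq> - of_nat m"
  obtains \<epsilon> where "\<epsilon> > 0" "\<And>m::nat. \<epsilon> * (of_nat m + 1) \<le> norm (\<beta> + of_nat m)"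
proof -
  define M where "M = nat \<lceil>2 * norm \<beta>\<rceil> + 1"
  define \<epsilon> where "\<epsilon> = min (1/2) (Min ((\<lambda>m. norm (\<beta> + of_nat m) / (of_nat m + 1)) ` {..<M}))"
  have pos: "norm (\<beta> + of_nat m) > 0" for m
    using assms by (auto simp: eq_neg_iff_add_eq_0)
  \<comment> \<open>finitely many \<open>m\<close> are handled by the minimum, the others by \<open>|\<beta> + m| \<ge> m - |\<beta>| \<ge> (m + 1)/2\<close>\<close>
  have "0 < Min ((\<lambda>m. norm (\<beta> + of_nat m) / (of_nat m + 1)) ` {..<M})"
    using pos by (subst Min_gr_iff) (auto simp: M_def)
  then have "\<epsilon> > 0"
    unfolding \<epsilon>_def by simp
  moreover have "\<epsilon> * (of_nat m + 1) \<le> norm (\<beta> + of_nat m)" for m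
  proof (cases "m < M")
    case True
    then have "\<epsilon> \<le> norm (\<beta> + of_nat m) / (of_nat m + 1)"
      unfolding \<epsilon>_def by (intro min.coboundedI2 Min_le) auto
    then show ?thesis by (simp add: field_simps)
  next
    case False
    then have "real m \<ge> 2 * norm \<beta> + 1" unfolding M_def by linarith
    have "\<epsilon> * (of_nat m + 1) \<le> (of_nat m + 1) / 2"
      unfolding \<epsilon>_def by (simp add: min_def)
    also have "\<dots> \<le> real m - norm \<beta>"
      using \<open>real m \<ge> 2 * norm \<beta> + 1\<close> by simp
    also have "\<dots> \<le> norm (\<beta> + of_nat m)"
      using norm_triangle_ineq2[of "of_nat m" "- \<beta>"] by (simp add: add.commute)
    finally show ?thesis .
  qed
  ultimately show ?thesis using that by blast
qed

lemma norm_add_of_nat_le: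
  fixes a :: "'a::real_normed_algebra_1"
  shows "norm (a + of_nat m) \<le> (norm a + 1) * (of_nat m + 1)"
proof -
  have "norm (a + of_nat m) \<le> norm a + of_nat m" using norm_triangle_ineq[of a "of_nat m"] by simp
  also have "\<dots> \<le> (norm a + 1) * (of_nat m + 1)" by (simp add: algebra_simps)
  finally show ?thesis .
qed

lemma norm_hyp3F2_coeff_Suc_le:
  fixes a1 a2 a3 b1 b2 :: complex and e1 e2 :: real
  assumes e1: "e1 > 0" "\<And>m::nat. e1 * (of_nat m + 1) \<le> norm (b1 + of_nat m)"
    and e2: "e2 > 0" "\<And>m::nat. e2 * (of_nat m + 1) \<le> norm (b2 + of_nat m)"
  defines "K \<equiv> (norm a1 + 1) * (norm a2 + 1) * (norm a3 + 1) / (e1 * e2)"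
  shows "norm (hyp3F2_coeff a1 a2 a3 b1 b2 (Suc m)) \<le> norm (hyp3F2_coeff a1 a2 a3 b1 b2 m) * K"
proof -
  define P where "P = (norm a1 + 1) * (norm a2 + 1) * (norm a3 + 1)"
  define num where "num = (a1 + of_nat m) * (a2 + of_nat m) * (a3 + of_nat m)"
  define den where "den = (b1 + of_nat m) * (b2 + of_nat m) * (of_nat m + 1 :: complex)"
  have rec: "hyp3F2_coeff a1 a2 a3 b1 b2 (Suc m) = hyp3F2_coeff a1 a2 a3 b1 b2 m * (num / den)"
    unfolding hyp3F2_coeff_def num_def den_def by (simp add: pochhammer_Suc field_simps)
  have "norm num \<le> ((norm a1 + 1) * (of_nat m + 1)) * ((norm a2 + 1) * (of_nat m + 1))
      * ((norm a3 + 1) * (of_nat m + 1))"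
    unfolding num_def norm_mult by (intro mult_mono norm_add_of_nat_le) auto
  also have "\<dots> = P * (of_nat m + 1)^3" unfolding P_def by (simp add: power3_eq_cube)
  finally have num: "norm num \<le> P * (of_nat m + 1)^3" .
  have "e1 * e2 * (of_nat m + 1)^3 = (e1 * (of_nat m + 1)) * (e2 * (of_nat m + 1)) * (of_nat m + 1)"
    by (simp add: power3_eq_cube)
  also have "\<dots> \<le> norm (b1 + of_nat m) * norm (b2 + of_nat m) * (of_nat m + 1)"
    using e1 e2 by (intro mult_mono) auto
  also have "\<dots> = norm den"
    unfolding den_def norm_mult using norm_of_nat[of "Suc m", where 'a=complex] by (simp add: add.commute)
  finally have den: "e1 * e2 * (of_nat m + 1)^3 \<le> norm den" .
  have "P > 0" unfolding P_def by (intro mult_pos_pos) (auto simp: add_nonneg_pos)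
  then have "norm (num / den) \<le> (P * (of_nat m + 1)^3) / (e1 * e2 * (of_nat m + 1)^3)"
    unfolding norm_divide by (intro frac_le) (use num den e1 e2 in auto)
  also have "\<dots> = K" unfolding K_def P_def by simp
  finally show ?thesis unfolding rec norm_mult by (intro mult_left_mono) auto
qed

lemma hyp3F2_coeff_bound:
  fixes a1 a2 a3 b1 b2 :: complex
  assumes b1: "\<forall>m::nat. b1 \<noteq> - of_nat m" and b2: "\<forall>m::nat. b2 \<noteq> - of_nat m"
  obtains K where "K > 0" "\<And>m. norm (hyp3F2_coeff a1 a2 a3 b1 b2 m) \<le> K^m"
proof -
  obtain e1 where e1: "e1 > 0" "\<And>m::nat. e1 * (of_nat m + 1) \<le> norm (b1 + of_nat m)"
    using norm_add_of_nat_ge_linear[OF b1] by blast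
  obtain e2 where e2: "e2 > 0" "\<And>m::nat. e2 * (of_nat m + 1) \<le> norm (b2 + of_nat m)"
    using norm_add_of_nat_ge_linear[OF b2] by blast
  define K where "K = (norm a1 + 1) * (norm a2 + 1) * (norm a3 + 1) / (e1 * e2)"
  have pos: "0 < norm z + 1" for z :: complex
    using norm_ge_zero[of z] by linarith
  have K: "K > 0"
    unfolding K_def by (rule divide_pos_pos[OF mult_pos_pos[OF mult_pos_pos[OF pos pos] pos]
      mult_pos_pos[OF e1(1) e2(1)]])
  have "norm (hyp3F2_coeff a1 a2 a3 b1 b2 m) \<le> K^m" for m
  proof (induction m)
    case (Suc m)
    have "norm (hyp3F2_coeff a1 a2 a3 b1 b2 (Suc m)) \<le> norm (hyp3F2_coeff a1 a2 a3 b1 b2 m) * K"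
      unfolding K_def by (rule norm_hyp3F2_coeff_Suc_le[OF e1 e2])
    also have "\<dots> \<le> K^m * K" using Suc K by (intro mult_right_mono) auto
    finally show ?case by (simp add: mult.commute)
  qed (simp add: hyp3F2_coeff_def)
  with K that show ?thesis by blast
qed

lemma cubic_substitution_factor:
  fixes x a :: complex
  assumes "x \<noteq> 4"
  shows "(1 - x/4) powr a * ((27/64)^m * x^(2*m) * (1 - x/4) powr (- (of_nat (3*m) + a)))
       = (27 * x^2 / (4 - x)^3)^m"
proof -
  have nz: "1 - x/4 \<noteq> 0" using assms by (auto simp: field_simps)
  have "(1 - x/4) powr a * (1 - x/4) powr (- (of_nat (3*m) + a)) = (1 - x/4) powr (- of_nat (3*m))"
    by (simp flip: powr_add)
  also have "\<dots> = inverse ((1 - x/4)^(3*m))"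
    by (simp only: powr_minus powr_nat'[OF disjI1[OF nz]])
  finally have e: "(1 - x/4) powr a * (1 - x/4) powr (- (of_nat (3*m) + a)) = inverse ((1 - x/4)^(3*m))" .
  have "(4 - x)^3 = 64 * (1 - x/4)^3" by (simp add: power3_eq_cube field_simps)
  then have cube: "27 * x^2 / (4 - x)^3 = (27/64) * x^2 * inverse ((1 - x/4)^3)"
    using nz by (simp add: field_simps)
  have "(1 - x/4) powr a * ((27/64)^m * x^(2*m) * (1 - x/4) powr (- (of_nat (3*m) + a)))
      = (27/64)^m * x^(2*m) * ((1 - x/4) powr a * (1 - x/4) powr (- (of_nat (3*m) + a)))"
    by (simp only: ac_simps)
  also have "\<dots> = (27/64)^m * x^(2*m) * inverse ((1 - x/4)^(3*m))"
    by (simp only: e)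
  also have "\<dots> = (27/64)^m * (x^2)^m * inverse (((1 - x/4)^3)^m)"
    by (simp only: power_mult)
  also have "\<dots> = (27 * x^2 / (4 - x)^3)^m"
    by (simp only: cube power_mult_distrib power_inverse)
  finally show ?thesis .
qed

lemma summable_cubic_majorant:
  fixes K r s :: real
  assumes K: "K > 0" and r: "0 \<le> r" "r \<le> 1" and Kr: "K * r < 1"
  shows "summable (\<lambda>m. K^m * (27/64)^m * r^(2*m) * (1 - r/4) powr (- (real (3*m) + s)))"
proof -
  define t where "t = 1 - r/4"
  define q where "q = K * (27/64) * r^2 / t^3"
  have t: "3/4 \<le> t" "t \<le> 1" unfolding t_def using r by auto
  have "K^m * (27/64)^m * r^(2*m) * t powr (- (real (3*m) + s)) = t powr (- s) * q^m" for m
  proof -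
    have "t powr (- (real (3*m) + s)) = t powr (- real (3*m)) * t powr (- s)"
      by (simp flip: powr_add)
    also have "t powr (- real (3*m)) = inverse ((t^3)^m)"
      using t powr_realpow[of t "3*m"] by (simp add: powr_minus power_mult)
    finally have "t powr (- (real (3*m) + s)) = inverse ((t^3)^m) * t powr (- s)" .
    moreover have "r^(2*m) = (r^2)^m" by (simp add: power_mult)
    ultimately show ?thesis
      unfolding q_def using t by (simp add: power_mult_distrib power_divide field_simps)
  qed
  moreover have "norm q < 1"
  proof -
    have "27/64 \<le> t^3"
      using power_mono[OF t(1), of 3] by (simp add: power3_eq_cube)
    then have "q \<le> K * (27/64) * r^2 / (27/64)"
      unfolding q_def using K t by (intro divide_left_mono) auto
    also have "\<dots> \<le> K * r" using r K by (simp add: power2_eq_square mult_left_le)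
    also have "\<dots> < 1" by (rule Kr)
    finally have "q < 1" .
    moreover have "0 \<le> q" unfolding q_def using K t by simp
    ultimately show ?thesis by simp
  qed
  ultimately show ?thesis
    unfolding t_def[symmetric] by (simp add: summable_mult summable_geometric)
qed

definition cubic_double_series_term :: "(nat \<Rightarrow> complex) \<Rightarrow> complex \<Rightarrow> complex \<Rightarrow> nat \<times> nat \<Rightarrow> complex" where
  "cubic_double_series_term c a x = (\<lambda>(m, j).
     c m * (27/64)^m * x^(2*m) * (pochhammer (of_nat (3*m) + a) j / fact j * (x/4)^j))"

lemma summable_on_cubic_double_series_term:
  fixes c :: "nat \<Rightarrow> complex" and a x :: complex and K :: real
  assumes c: "\<And>m. norm (c m) \<le> K^m" and K: "K > 0" and x: "norm x \<le> 1" "K * norm x < 1"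
  shows "cubic_double_series_term c a x summable_on UNIV"
proof (rule summable_on_pairs_dominated)
  fix m j
  have p: "norm (pochhammer (of_nat (3*m) + a) j) \<le> pochhammer (real (3*m) + norm a) j"
    by (rule norm_pochhammer_le) (use norm_triangle_ineq[of "of_nat (3*m)" a] in simp)
  moreover have "0 \<le> pochhammer (real (3*m) + norm a) j"
    using p norm_ge_zero order_trans by blast
  ultimately show "norm (cubic_double_series_term c a x (m, j))
      \<le> K^m * (27/64)^m * norm x^(2*m) * (pochhammer (real (3*m) + norm a) j / fact j * (norm x/4)^j)"
    unfolding cubic_double_series_term_def using c[of m] K
    by (auto simp: norm_mult norm_divide norm_power intro!: mult_mono divide_right_mono)
next
  fix m
  show "(\<lambda>j. K^m * (27/64)^m * norm x^(2*m) * (pochhammer (real (3*m) + norm a) j / fact j * (norm x/4)^j))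
      sums (K^m * (27/64)^m * norm x^(2*m) * (1 - norm x/4) powr (- (real (3*m) + norm a)))"
    using x by (intro sums_mult pochhammer_binomial_series_real) auto
next
  show "summable (\<lambda>m. K^m * (27/64)^m * norm x^(2*m) * (1 - norm x/4) powr (- (real (3*m) + norm a)))"
    using x K by (intro summable_cubic_majorant) auto
qed

lemma cubic_double_series_term_diagonal:
  "(\<Sum>m\<le>N div 2. cubic_double_series_term c a x (m, N - 2*m)) = cubic_substitution_coeff c a N * x^N"
  unfolding cubic_substitution_coeff_def sum_distrib_right
proof (rule sum.cong[OF refl])
  fix m assume "m \<in> {..N div 2}"
  then have "x^(2*m) * x^(N - 2*m) = x^N" by (simp flip: power_add)
  then show "cubic_double_series_term c a x (m, N - 2*m) = c m * (27/64)^m * pochhammer (of_nat (3*m) + a) (N - 2*m)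
      / (fact (N - 2*m) * 4^(N - 2*m)) * x^N"
    unfolding cubic_double_series_term_def by (simp add: power_divide field_simps)
qed

lemma cubic_double_series_term_row:
  assumes "norm x < 4"
  shows "(\<lambda>j. cubic_double_series_term c a x (m, j))
           sums (c m * (27/64)^m * x^(2*m) * (1 - x/4) powr (- (of_nat (3*m) + a)))"
proof -
  have "norm (x/4) < 1" using assms by (simp add: norm_divide)
  from sums_mult[OF pochhammer_binomial_series_complex[OF this, of "of_nat (3*m) + a"],
      of "c m * (27/64)^m * x^(2*m)"]
  show ?thesis unfolding cubic_double_series_term_def by simp
qed

lemma cubic_substitution_sums:
  fixes c :: "nat \<Rightarrow> complex" and a x :: complex and K :: real
  assumes c: "\<And>m. norm (c m) \<le> K^m" and K: "K > 0" and x: "norm x \<le> 1" "K * norm x < 1"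
  shows "summable (\<lambda>N. cubic_substitution_coeff c a N * x^N)"
    and "(\<lambda>m. c m * (27 * x^2 / (4 - x)^3)^m)
           sums ((1 - x/4) powr a * (\<Sum>N. cubic_substitution_coeff c a N * x^N))"
proof -
  let ?T = "cubic_double_series_term c a x"
  have T: "?T summable_on UNIV"
    using summable_on_cubic_double_series_term[OF c K x] .
  have diagonals: "(\<lambda>N. cubic_substitution_coeff c a N * x^N) sums infsum ?T UNIV"
    using summable_on_pairs_sums_diagonals[OF T] unfolding cubic_double_series_term_diagonal .
  have "norm x < 4" using x by simp
  from summable_on_pairs_sums_rows[OF T cubic_double_series_term_row[OF this]]
  have rows: "(\<lambda>m. c m * (27/64)^m * x^(2*m) * (1 - x/4) powr (- (of_nat (3*m) + a))) sums infsum ?T UNIV" .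
  show "summable (\<lambda>N. cubic_substitution_coeff c a N * x^N)"
    using diagonals by (rule sums_summable)
  have "x \<noteq> 4" using x by auto
  have "(1 - x/4) powr a * (c m * (27/64)^m * x^(2*m) * (1 - x/4) powr (- (of_nat (3*m) + a)))
      = c m * (27 * x^2 / (4 - x)^3)^m" for m
  proof -
    have "(1 - x/4) powr a * (c m * (27/64)^m * x^(2*m) * (1 - x/4) powr (- (of_nat (3*m) + a)))
        = c m * ((1 - x/4) powr a * ((27/64)^m * x^(2*m) * (1 - x/4) powr (- (of_nat (3*m) + a))))"
      by (simp only: ac_simps)
    then show ?thesis by (simp only: cubic_substitution_factor[OF \<open>x \<noteq> 4\<close>])
  qed
  then show "(\<lambda>m. c m * (27 * x^2 / (4 - x)^3)^m)
      sums ((1 - x/4) powr a * (\<Sum>N. cubic_substitution_coeff c a N * x^N))"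
    using sums_mult[OF rows, of "(1 - x/4) powr a"] unfolding sums_unique[OF diagonals] by (simp only:)
qed

theorem theorem3:
  fixes k :: nat and a b :: complex
  assumes uv: "pochhammer (u3 k a b) k * pochhammer (v3 k a b) k \<noteq> 0"
    and l1: "\<forall>m::nat. 3/4 + of_nat k/2 + a/2 + b/2 \<noteq> - of_nat m"
    and l2: "\<forall>m::nat. 3/4 + of_nat k/2 + a/2 - b/2 \<noteq> - of_nat m"
    and l3: "\<forall>m::nat. 1/2 + of_nat k + a + b \<noteq> - of_nat m"
    and l4: "\<forall>m::nat. 1/2 + of_nat k + a - b \<noteq> - of_nat m"
  shows "\<forall>\<^sub>F x in nhds 0.
           summable (\<lambda>n. coef3 k a b n * x ^ n) \<and>
           hyp3F2 (a/3) (1/3 + a/3) (2/3 + a/3)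
                  (3/4 + of_nat k/2 + a/2 + b/2) (3/4 + of_nat k/2 + a/2 - b/2)
                  (27 * x^2 / (4 - x)^3)
           = (1 - x/4) powr a * (\<Sum>n. coef3 k a b n * x ^ n)"
proof -
  define c where "c = hyp3F2_coeff (a/3) (1/3 + a/3) (2/3 + a/3)
    (3/4 + of_nat k/2 + a/2 + b/2) (3/4 + of_nat k/2 + a/2 - b/2)"
  obtain K where K: "K > 0" and c_bound: "\<And>m. norm (c m) \<le> K^m"
    unfolding c_def using hyp3F2_coeff_bound[OF l1 l2] by blast
  have coeff: "cubic_substitution_coeff c a = coef3 k a b"
    unfolding c_def using cubic_substitution_coeff_eq_coef3[OF uv l1 l2 l3 l4] by blast
  have "\<forall>\<^sub>F x in nhds 0. x \<in> ball 0 (min 1 (1/K))"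
    using K by (intro eventually_nhds_in_open) auto
  then show ?thesis
  proof (rule eventually_mono)
    fix x :: complex assume "x \<in> ball 0 (min 1 (1/K))"
    then have "norm x \<le> 1" "K * norm x < 1" using K by (auto simp: field_simps)
    note sums = cubic_substitution_sums[OF c_bound K this, of a, unfolded coeff]
    have "hyp3F2 (a/3) (1/3 + a/3) (2/3 + a/3) (3/4 + of_nat k/2 + a/2 + b/2)
        (3/4 + of_nat k/2 + a/2 - b/2) (27 * x^2 / (4 - x)^3) = (\<Sum>m. c m * (27 * x^2 / (4 - x)^3)^m)"
      unfolding hyp3F2_def c_def hyp3F2_coeff_def ..
    with sums show "summable (\<lambda>n. coef3 k a b n * x ^ n) \<and> hyp3F2 (a/3) (1/3 + a/3) (2/3 + a/3)
        (3/4 + of_nat k/2 + a/2 + b/2) (3/4 + of_nat k/2 + a/2 - b/2) (27 * x^2 / (4 - x)^3)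
      = (1 - x/4) powr a * (\<Sum>n. coef3 k a b n * x ^ n)"
      using sums_unique[OF sums(2)] by simp
  qed
qed

end
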